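(* Let $X$ be a complete CAT(0) space and $(T_n)_{n\in\mathbb{N}}$ a family of self-mappings of $X$, each satisfying property $(P_2)$, with $F:=\bigcap_{n\in\mathbb{N}} Fix(T_n)\neq\emptyset$. For $x\in X$ let $x_0:=x$ and $x_{n+1}:=T_nx_n$ for all $n\in\mathbb{N}$. Let $(\gamma_n)$ be a sequence of positive real numbers with $\sum_{n=0}^\infty\gamma_n^2=\infty$. Assume: (C1) for all $n,m\in\mathbb{N}$ and all $w\in X$, $d(T_nw,T_mw)\le \frac{|\gamma_n-\gamma_m|}{\gamma_n}d(w,T_nw)$; (C2) the sequence $\left(\frac{d(x_n,x_{n+1})}{\gamma_n}\right)_{n\in\mathbb{N}}$ is nonincreasing. Then $(x_n)$ $\Delta$-converges to a point of $F$.
   Context: A geodesic space $(X,d)$ is CAT(0) if for all $z\in X$, all geodesics $\gamma:[a,b]\to X$ and all $t\in[0,1]$, $d^2(z,\gamma((1-t)a+tb))\le(1-t)d^2(z,\gamma(a))+td^2(z,\gamma(b))-t(1-t)d^2(\gamma(a),\gamma(b))$. A mapping $T:X\to X$ satisfies property $(P_2)$ if for all $x,y\in X$, $2d^2(Tx,Ty)\le d^2(x,Ty)+d^2(y,Tx)-d^2(x,Tx)-d^2(y,Ty)$. $Fix(T)$ denotes the fixed point set. For a bounded sequence $(u_n)$, with $r(y,(u_n)):=\limsup_n d(y,u_n)$, an asymptotic center of $(u_n)$ is a point $c\in X$ minimizing $y\mapsto r(y,(u_n))$ over $X$. A bounded sequence $(x_n)$ $\Delta$-converges to $x$ if every subsequence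 of $(x_n)$ has $x$ as its unique asymptotic center. *)

theory Defs
  imports "HOL-Analysis.Analysis"
begin

definition geodesic :: "(real \<Rightarrow> 'a::metric_space) \<Rightarrow> real \<Rightarrow> real \<Rightarrow> bool" where
  "geodesic g a b \<longleftrightarrow> a \<le> b \<and> (\<forall>s\<in>{a..b}. \<forall>t\<in>{a..b}. dist (g s) (g t) = \<bar>s - t\<bar>)"

definition geodesic_space :: "'a::metric_space itself \<Rightarrow> bool" where
  "geodesic_space _ \<longleftrightarrow> (\<forall>x y::'a. \<exists>g a b. geodesic g a b \<and> g a = x \<and> g b = y)"

definition CAT0 :: "'a::metric_space itself \<Rightarrow> bool" where
  "CAT0 TYPE_A \<longleftrightarrow> geodesic_space TYPE_A \<and>
     (\<forall>(z::'a) g a b t. geodesic g a b \<and> t \<in> {0..1} \<longrightarrow>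
        (dist z (g ((1 - t) * a + t * b)))\<^sup>2
          \<le> (1 - t) * (dist z (g a))\<^sup>2 + t * (dist z (g b))\<^sup>2
             - t * (1 - t) * (dist (g a) (g b))\<^sup>2)"

definition property_P2 :: "('a::metric_space \<Rightarrow> 'a) \<Rightarrow> bool" where
  "property_P2 T \<longleftrightarrow> (\<forall>x y. 2 * (dist (T x) (T y))\<^sup>2
      \<le> (dist x (T y))\<^sup>2 + (dist y (T x))\<^sup>2 - (dist x (T x))\<^sup>2 - (dist y (T y))\<^sup>2)"

definition Fix :: "('a \<Rightarrow> 'a) \<Rightarrow> 'a set" where
  "Fix T = {x. T x = x}"

definition asym_radius :: "'a::metric_space \<Rightarrow> (nat \<Rightarrow> 'a) \<Rightarrow> ereal" where
  "asym_radius y u = limsup (\<lambda>n. ereal (dist y (u n)))"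

definition asymptotic_center :: "'a::metric_space \<Rightarrow> (nat \<Rightarrow> 'a) \<Rightarrow> bool" where
  "asymptotic_center c u \<longleftrightarrow> (\<forall>y. asym_radius c u \<le> asym_radius y u)"

definition Delta_converges :: "(nat \<Rightarrow> 'a::metric_space) \<Rightarrow> 'a \<Rightarrow> bool" where
  "Delta_converges u x \<longleftrightarrow> bounded (range u) \<and>
     (\<forall>\<sigma>. strict_mono \<sigma> \<longrightarrow>
        asymptotic_center x (u \<circ> \<sigma>) \<and> (\<forall>c. asymptotic_center c (u \<circ> \<sigma>) \<longrightarrow> c = x))"

end

theory Submission
  imports Defs
begin

(* Under (P2), every common fixed point q satisfies
   d(x_{n+1}, q)^2 + d(x_n, x_{n+1})^2 <= d(x_n, q)^2, so (x_n) is Fejer monotone with respect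
   to F and its steps are square summable.  Since the ratios d(x_n, x_{n+1}) / gamma_n decrease
   while the gamma_n^2 are not summable, the ratios tend to 0, and (C1) turns this into
   d(x_n, T_m x_n) -> 0 for every m.  Property (P2) passes to asymptotic radii, which makes every
   asymptotic centre of a subsequence a common fixed point.  Finally, in a complete CAT(0) space
   asymptotic centres exist and are strict minimisers of the radius, while the radius of a point
   of F is the same limit along every subsequence; hence all subsequences share one centre. *)

section \<open>Limit superior of bounded real sequences\<close>

(* real_of_ereal sends infinite values to 0, hence the boundedness hypotheses below. *)
definition real_limsup :: "(nat \<Rightarrow> real) \<Rightarrow> real" where
  "real_limsup f = real_of_ereal (limsup (\<lambda>n. ereal (f n)))"

lemma Bseq_add_Bseq:
  fixes f g :: "nat \<Rightarrow> 'a::real_normed_vector"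
  assumes "Bseq f" "Bseq g"
  shows "Bseq (\<lambda>n. f n + g n)"
proof -
  obtain K L where "\<And>n. norm (f n) \<le> K" "\<And>n. norm (g n) \<le> L"
    using assms unfolding Bseq_def by blast
  then have "norm (f n + g n) \<le> K + L" for n
    by (meson add_mono norm_triangle_le)
  then show ?thesis by (rule BseqI')
qed

lemma limsup_ereal_eq_real_limsup:
  assumes "Bseq f"
  shows "limsup (\<lambda>n. ereal (f n)) = ereal (real_limsup f)"
proof -
  obtain K where K: "\<And>n. \<bar>f n\<bar> \<le> K" using assms unfolding Bseq_def by auto
  then have lower: "- K \<le> f n" for n by (meson abs_le_D2 minus_le_iff)
  have "limsup (\<lambda>n. ereal (f n)) \<le> ereal K"
    by (intro Limsup_bounded always_eventually) (use K abs_le_D1 in auto)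
  moreover have "ereal (- K) \<le> limsup (\<lambda>n. ereal (f n))"
    by (intro le_Limsup always_eventually) (use lower in auto)
  ultimately have "\<bar>limsup (\<lambda>n. ereal (f n))\<bar> \<noteq> \<infinity>" by auto
  then show ?thesis unfolding real_limsup_def by (simp add: ereal_real')
qed

lemma real_limsup_tendsto: "f \<longlonglongrightarrow> l \<Longrightarrow> real_limsup f = l"
  unfolding real_limsup_def using lim_imp_Limsup[of sequentially "\<lambda>n. ereal (f n)" "ereal l"] by simp

lemma real_limsup_const [simp]: "real_limsup (\<lambda>_. c) = c"
  by (rule real_limsup_tendsto[OF tendsto_const])

lemma real_limsup_mono:
  assumes "Bseq f" "Bseq g" "eventually (\<lambda>n. f n \<le> g n) sequentially"
  shows "real_limsup f \<le> real_limsup g"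
proof -
  have "limsup (\<lambda>n. ereal (f n)) \<le> limsup (\<lambda>n. ereal (g n))"
    by (rule Limsup_mono) (use assms(3) in \<open>auto elim: eventually_mono\<close>)
  then show ?thesis by (simp add: limsup_ereal_eq_real_limsup assms(1,2))
qed

lemma real_limsup_nonneg:
  assumes "Bseq f" "\<And>n. 0 \<le> f n"
  shows "0 \<le> real_limsup f"
  using real_limsup_mono[OF Bfun_const assms(1), of 0] assms(2) by simp

lemma real_limsup_add_le:
  assumes "Bseq f" "Bseq g"
  shows "real_limsup (\<lambda>n. f n + g n) \<le> real_limsup f + real_limsup g"
proof -
  have "limsup (\<lambda>n. ereal (f n) + ereal (g n))
      \<le> limsup (\<lambda>n. ereal (f n)) + limsup (\<lambda>n. ereal (g n))"
    by (rule ereal_limsup_add_mono)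
  then show ?thesis
    by (simp add: limsup_ereal_eq_real_limsup Bseq_add_Bseq assms)
qed

lemma real_limsup_eq_if_diff_tendsto_0:
  assumes "Bseq g" "(\<lambda>n. f n - g n) \<longlonglongrightarrow> 0"
  shows "real_limsup f = real_limsup g"
proof (rule antisym)
  have d: "Bseq (\<lambda>n. f n - g n)" "Bseq (\<lambda>n. g n - f n)"
    using assms(2) tendsto_minus[OF assms(2)] by (auto intro: convergent_imp_Bseq convergentI)
  have f: "Bseq f" using Bseq_add_Bseq[OF assms(1) d(1)] by simp
  have "real_limsup f \<le> real_limsup g + real_limsup (\<lambda>n. f n - g n)"
    using real_limsup_add_le[OF assms(1) d(1)] by simp
  then show "real_limsup f \<le> real_limsup g"
    using real_limsup_tendsto[OF assms(2)] by simp
  have "real_limsup g \<le> real_limsup f + real_limsup (\<lambda>n. g n - f n)"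
    using real_limsup_add_le[OF f d(2)] by simp
  then show "real_limsup g \<le> real_limsup f"
    using real_limsup_tendsto[OF tendsto_minus[OF assms(2)]] by simp
qed

lemma real_limsup_cmult:
  assumes "Bseq f" "0 \<le> c"
  shows "real_limsup (\<lambda>n. c * f n) = c * real_limsup f"
proof -
  have "limsup (\<lambda>n. ereal c * ereal (f n)) = ereal c * limsup (\<lambda>n. ereal (f n))"
    using assms(2) by (rule limsup_ereal_mult_left)
  then show ?thesis
    unfolding real_limsup_def by (simp add: limsup_ereal_eq_real_limsup[OF assms(1)])
qed

lemma real_limsup_subseq_tendsto:
  assumes "Bseq f"
  obtains r where "strict_mono r" "(f \<circ> r) \<longlonglongrightarrow> real_limsup f"
proof -
  obtain r where "strict_mono r" "((\<lambda>n. ereal (f n)) \<circ> r) \<longlonglongrightarrow> limsup (\<lambda>n. ereal (f n))"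
    using limsup_subseq_lim by blast
  then show ?thesis
    using that by (simp add: limsup_ereal_eq_real_limsup assms comp_def)
qed

lemma subseq_limit_le_real_limsup:
  assumes "Bseq f" "strict_mono r" "(f \<circ> r) \<longlonglongrightarrow> l"
  shows "l \<le> real_limsup f"
proof -
  have "ereal l = limsup ((\<lambda>n. ereal (f n)) \<circ> r)"
    using assms(3) lim_imp_Limsup[of sequentially "\<lambda>n. ereal (f (r n))" "ereal l"]
    by (simp add: comp_def)
  also have "\<dots> \<le> limsup (\<lambda>n. ereal (f n))"
    using assms(2) by (rule limsup_subseq_mono)
  finally show ?thesis by (simp add: limsup_ereal_eq_real_limsup assms(1))
qed

lemma real_limsup_compose_mono:
  assumes h: "continuous_on UNIV h" "mono h" and f: "Bseq f"
  shows "real_limsup (\<lambda>n. h (f n)) = h (real_limsup f)"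
proof -
  obtain K where K: "\<And>n. \<bar>f n\<bar> \<le> K" using f unfolding Bseq_def by auto
  have "h (- K) \<le> h (f n) \<and> h (f n) \<le> h K" for n
    using K[of n] h(2) by (auto intro: monoD)
  then have hf: "Bseq (\<lambda>n. h (f n))"
    by (intro Limits.Bseq_eq_bounded[of _ "h (- K)" "h K"]) auto
  obtain s where s: "strict_mono s" "((\<lambda>n. h (f n)) \<circ> s) \<longlonglongrightarrow> real_limsup (\<lambda>n. h (f n))"
    using real_limsup_subseq_tendsto[OF hf] by blast
  have "bounded (range (f \<circ> s))"
    using Bseq_subseq[OF f, of s] by (simp add: Bseq_eq_bounded comp_def)
  then obtain t l where t: "strict_mono t" "(f \<circ> (s \<circ> t)) \<longlonglongrightarrow> l"
    using bounded_imp_convergent_subsequence by (metis comp_assoc)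
  have "(\<lambda>n. h (f (s (t n)))) \<longlonglongrightarrow> h l"
    using continuous_on_tendsto_compose[OF h(1) t(2)] by (simp add: comp_def)
  moreover have "(\<lambda>n. h (f (s (t n)))) \<longlonglongrightarrow> real_limsup (\<lambda>n. h (f n))"
    using LIMSEQ_subseq_LIMSEQ[OF s(2) t(1)] by (simp add: comp_def)
  ultimately have "real_limsup (\<lambda>n. h (f n)) = h l" by (rule LIMSEQ_unique[symmetric])
  moreover have "l \<le> real_limsup f"
    using subseq_limit_le_real_limsup[OF f strict_mono_o[OF s(1) t(1)] t(2)] .
  ultimately have "real_limsup (\<lambda>n. h (f n)) \<le> h (real_limsup f)"
    by (metis h(2) monoD)
  moreover obtain r where r: "strict_mono r" "(f \<circ> r) \<longlonglongrightarrow> real_limsup f"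
    using real_limsup_subseq_tendsto[OF f] by blast
  then have "((\<lambda>n. h (f n)) \<circ> r) \<longlonglongrightarrow> h (real_limsup f)"
    using continuous_on_tendsto_compose[OF h(1)] by (simp add: comp_def)
  then have "h (real_limsup f) \<le> real_limsup (\<lambda>n. h (f n))"
    by (rule subseq_limit_le_real_limsup[OF hf r(1)])
  ultimately show ?thesis by (rule antisym)
qed

lemma real_limsup_power2:
  assumes "Bseq f" "\<And>n. 0 \<le> f n"
  shows "real_limsup (\<lambda>n. (f n)\<^sup>2) = (real_limsup f)\<^sup>2"
proof -
  define h :: "real \<Rightarrow> real" where "h x = (max 0 x)\<^sup>2" for x
  have "continuous_on UNIV h" unfolding h_def by (intro continuous_intros)
  moreover have "mono h" unfolding h_def by (intro monoI power_mono) auto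
  ultimately have "real_limsup (\<lambda>n. h (f n)) = h (real_limsup f)"
    using assms(1) by (rule real_limsup_compose_mono)
  moreover have "0 \<le> real_limsup f" using assms by (rule real_limsup_nonneg)
  ultimately show ?thesis using assms(2) by (simp add: h_def)
qed

section \<open>Asymptotic centres in CAT(0) spaces\<close>

definition real_asym_radius :: "'a::metric_space \<Rightarrow> (nat \<Rightarrow> 'a) \<Rightarrow> real" where
  "real_asym_radius y u = real_limsup (\<lambda>n. dist y (u n))"

lemma Bseq_dist:
  assumes "bounded (range u)"
  shows "Bseq (\<lambda>n. dist y (u n))" "Bseq (\<lambda>n. (dist y (u n))\<^sup>2)"
proof -
  obtain B where "\<And>n. dist y (u n) \<le> B"
    using bounded_any_center[of "range u" y] assms by auto
  then show "Bseq (\<lambda>n. dist y (u n))" by (auto intro!: BseqI'[of _ B])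
  then show "Bseq (\<lambda>n. (dist y (u n))\<^sup>2)" unfolding power2_eq_square using Bseq_mult by blast
qed

lemma asym_radius_eq_real:
  "bounded (range u) \<Longrightarrow> asym_radius y u = ereal (real_asym_radius y u)"
  unfolding asym_radius_def real_asym_radius_def by (rule limsup_ereal_eq_real_limsup[OF Bseq_dist(1)])

lemma asymptotic_center_iff_real:
  "bounded (range u) \<Longrightarrow> asymptotic_center c u \<longleftrightarrow> (\<forall>y. real_asym_radius c u \<le> real_asym_radius y u)"
  unfolding asymptotic_center_def by (simp add: asym_radius_eq_real)

lemma real_asym_radius_power2:
  "bounded (range u) \<Longrightarrow> (real_asym_radius y u)\<^sup>2 = real_limsup (\<lambda>n. (dist y (u n))\<^sup>2)"
  unfolding real_asym_radius_def by (simp add: real_limsup_power2 Bseq_dist)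

lemma real_asym_radius_nonneg: "bounded (range u) \<Longrightarrow> 0 \<le> real_asym_radius y u"
  unfolding real_asym_radius_def by (simp add: real_limsup_nonneg Bseq_dist)

lemma real_asym_radius_le_dist:
  assumes "bounded (range u)"
  shows "real_asym_radius y u \<le> real_asym_radius z u + dist y z"
proof -
  have "dist y (u n) \<le> dist z (u n) + dist y z" for n
    using dist_triangle[of y "u n" z] by (simp add: dist_commute)
  then have "real_limsup (\<lambda>n. dist y (u n)) \<le> real_limsup (\<lambda>n. dist z (u n) + dist y z)"
    by (intro real_limsup_mono always_eventually allI Bseq_add Bseq_dist assms)
  also have "\<dots> \<le> real_limsup (\<lambda>n. dist z (u n)) + dist y z"
    using real_limsup_add_le[OF Bseq_dist(1)[OF assms] Bfun_const] by simp
  finally show ?thesis unfolding real_asym_radius_def .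
qed

lemma CAT0_midpoint:
  fixes x y :: "'a::metric_space"
  assumes "CAT0 TYPE('a)"
  obtains m :: 'a where "\<And>z. (dist z m)\<^sup>2 \<le> (dist z x)\<^sup>2 / 2 + (dist z y)\<^sup>2 / 2 - (dist x y)\<^sup>2 / 4"
proof -
  obtain g a b where g: "geodesic g a b" "g a = x" "g b = y"
    using assms unfolding CAT0_def geodesic_space_def by blast
  have "\<forall>(z::'a) g a b t. geodesic g a b \<and> t \<in> {0..1} \<longrightarrow>
      (dist z (g ((1 - t) * a + t * b)))\<^sup>2
        \<le> (1 - t) * (dist z (g a))\<^sup>2 + t * (dist z (g b))\<^sup>2 - t * (1 - t) * (dist (g a) (g b))\<^sup>2"
    using assms unfolding CAT0_def by blast
  from this[rule_format, of g a b "1/2"] g show thesis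
    by (intro that[of "g ((1 - 1/2) * a + 1/2 * b)"]) auto
qed

lemma real_asym_radius_midpoint:
  assumes u: "bounded (range u)"
    and m: "\<And>z. (dist z m)\<^sup>2 \<le> (dist z x)\<^sup>2 / 2 + (dist z y)\<^sup>2 / 2 - (dist x y)\<^sup>2 / 4"
  shows "(real_asym_radius m u)\<^sup>2
    \<le> (real_asym_radius x u)\<^sup>2 / 2 + (real_asym_radius y u)\<^sup>2 / 2 - (dist x y)\<^sup>2 / 4"
proof -
  let ?D = "\<lambda>z n. (dist z (u n))\<^sup>2"
  have half_x: "Bseq (\<lambda>n. 1/2 * ?D x n)" and half_y: "Bseq (\<lambda>n. 1/2 * ?D y n)"
    by (intro Bseq_mult Bfun_const Bseq_dist u)+
  have half: "real_limsup (\<lambda>n. 1/2 * ?D z n) = 1/2 * real_limsup (?D z)" for z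
    by (rule real_limsup_cmult[OF Bseq_dist(2)[OF u]]) simp
  have "?D m n \<le> (1/2 * ?D x n + 1/2 * ?D y n) + - (dist x y)\<^sup>2 / 4" for n
    using m[of "u n"] by (simp add: dist_commute)
  then have "real_limsup (?D m) \<le> real_limsup (\<lambda>n. (1/2 * ?D x n + 1/2 * ?D y n) + - (dist x y)\<^sup>2 / 4)"
    by (intro real_limsup_mono always_eventually allI Bseq_add Bseq_add_Bseq Bseq_mult Bfun_const Bseq_dist u)
  also have "\<dots> \<le> real_limsup (\<lambda>n. 1/2 * ?D x n + 1/2 * ?D y n) - (dist x y)\<^sup>2 / 4"
    using real_limsup_add_le[OF Bseq_add_Bseq[OF half_x half_y] Bfun_const[of "- (dist x y)\<^sup>2 / 4"]]
    by simp
  also have "\<dots> \<le> real_limsup (\<lambda>n. 1/2 * ?D x n) + real_limsup (\<lambda>n. 1/2 * ?D y n) - (dist x y)\<^sup>2 / 4"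
    using real_limsup_add_le[OF half_x half_y] by simp
  also have "\<dots> = 1/2 * real_limsup (?D x) + 1/2 * real_limsup (?D y) - (dist x y)\<^sup>2 / 4"
    by (simp only: half)
  finally show ?thesis by (simp add: real_asym_radius_power2 u)
qed

lemma real_asym_radius_cong_dist_tendsto_0:
  assumes u: "bounded (range u)" and uv: "(\<lambda>n. dist (u n) (v n)) \<longlonglongrightarrow> 0"
  shows "bounded (range v)" "real_asym_radius y v = real_asym_radius y u"
proof -
  obtain B where B: "\<And>n. dist y (u n) \<le> B"
    using bounded_any_center[of "range u" y] u by auto
  obtain C where C: "\<And>n. dist (u n) (v n) \<le> C"
    using convergent_imp_Bseq[OF convergentI[OF uv]] unfolding Bseq_def by auto
  have "dist y (v n) \<le> B + C" for n
    using dist_triangle[of y "v n" "u n"] B[of n] C[of n] by linarith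
  then show "bounded (range v)" unfolding bounded_def by blast
  have "\<bar>dist y (v n) - dist y (u n)\<bar> \<le> dist (u n) (v n)" for n
    using dist_triangle[of y "v n" "u n"] dist_triangle[of y "u n" "v n"] dist_commute[of "v n" "u n"]
    unfolding abs_le_iff by linarith
  then have "(\<lambda>n. dist y (v n) - dist y (u n)) \<longlonglongrightarrow> 0"
    by (intro Lim_null_comparison[OF always_eventually uv]) auto
  then show "real_asym_radius y v = real_asym_radius y u"
    unfolding real_asym_radius_def by (rule real_limsup_eq_if_diff_tendsto_0[OF Bseq_dist(1)[OF u]])
qed

(* Points whose radius is almost minimal are close to each other; this gives both existence
   and uniqueness of asymptotic centres. *)
lemma dist_le_real_asym_radius_excess:
  fixes u :: "nat \<Rightarrow> 'a::metric_space"
  assumes "CAT0 TYPE('a)" "bounded (range u)" "0 \<le> R" "\<And>z. R \<le> real_asym_radius z u"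
  shows "(dist x y)\<^sup>2 \<le> 2 * ((real_asym_radius x u)\<^sup>2 - R\<^sup>2) + 2 * ((real_asym_radius y u)\<^sup>2 - R\<^sup>2)"
proof -
  obtain m where "\<And>z. (dist z m)\<^sup>2 \<le> (dist z x)\<^sup>2 / 2 + (dist z y)\<^sup>2 / 2 - (dist x y)\<^sup>2 / 4"
    using CAT0_midpoint[OF assms(1)] by blast
  then have "(real_asym_radius m u)\<^sup>2
      \<le> (real_asym_radius x u)\<^sup>2 / 2 + (real_asym_radius y u)\<^sup>2 / 2 - (dist x y)\<^sup>2 / 4"
    by (rule real_asym_radius_midpoint[OF assms(2)])
  moreover have "R\<^sup>2 \<le> (real_asym_radius m u)\<^sup>2"
    using assms(3,4) by (intro power_mono) auto
  ultimately show ?thesis by (simp add: field_simps)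
qed

lemma asymptotic_center_radius_less:
  fixes u :: "nat \<Rightarrow> 'a::metric_space"
  assumes "CAT0 TYPE('a)" "bounded (range u)" "asymptotic_center c u" "y \<noteq> c"
  shows "real_asym_radius c u < real_asym_radius y u"
proof -
  have "\<And>z. real_asym_radius c u \<le> real_asym_radius z u"
    using assms(2,3) asymptotic_center_iff_real by blast
  then have "(dist c y)\<^sup>2 \<le> 2 * ((real_asym_radius y u)\<^sup>2 - (real_asym_radius c u)\<^sup>2)"
    using dist_le_real_asym_radius_excess[OF assms(1,2) real_asym_radius_nonneg[OF assms(2)], of c c y]
    by simp
  moreover have "0 < (dist c y)\<^sup>2" using assms(4) by simp
  ultimately have "(real_asym_radius c u)\<^sup>2 < (real_asym_radius y u)\<^sup>2" by (smt (verit))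
  then show ?thesis
    using real_asym_radius_nonneg[OF assms(2)] by (rule power_less_imp_less_base)
qed

lemma asymptotic_center_unique:
  fixes u :: "nat \<Rightarrow> 'a::metric_space"
  assumes "CAT0 TYPE('a)" "bounded (range u)" "asymptotic_center c u" "asymptotic_center c' u"
  shows "c' = c"
  using asymptotic_center_radius_less[OF assms(1-3), of c'] assms(2,4)
  by (meson asymptotic_center_iff_real not_le)

lemma asymptotic_center_exists:
  fixes u :: "nat \<Rightarrow> 'a::complete_space"
  assumes cat: "CAT0 TYPE('a)" and u: "bounded (range u)"
  obtains c where "asymptotic_center c u"
proof -
  let ?r = "\<lambda>y. real_asym_radius y u"
  define R where "R = (INF y. ?r y)"
  have R_le: "R \<le> ?r y" for y
    unfolding R_def by (rule cINF_lower) (auto intro: bdd_belowI[of _ 0] real_asym_radius_nonneg[OF u])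
  have R_nonneg: "0 \<le> R"
    unfolding R_def by (rule cINF_greatest) (auto intro: real_asym_radius_nonneg[OF u])
  have "\<exists>y. ?r y < R + inverse (real (Suc k))" for k
    using cInf_lessD[of "range ?r" "R + inverse (real (Suc k))"] unfolding R_def by auto
  then obtain y where y: "\<And>k. ?r (y k) < R + inverse (real (Suc k))" by metis
  have "eventually (\<lambda>k. R \<le> ?r (y k)) sequentially"
    by (intro always_eventually allI R_le)
  moreover have "eventually (\<lambda>k. ?r (y k) \<le> R + inverse (real (Suc k))) sequentially"
    by (intro always_eventually allI less_imp_le y)
  moreover have "(\<lambda>k. R + inverse (real (Suc k))) \<longlonglongrightarrow> R"
    using tendsto_add[OF tendsto_const LIMSEQ_inverse_real_of_nat] by simp
  ultimately have ry: "(\<lambda>k. ?r (y k)) \<longlonglongrightarrow> R"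
    by (rule tendsto_sandwich[OF _ _ tendsto_const])
  have "Cauchy y"
  proof (rule metric_CauchyI)
    fix e :: real assume "0 < e"
    have "(\<lambda>k. (?r (y k))\<^sup>2) \<longlonglongrightarrow> R\<^sup>2" using ry by (rule tendsto_power)
    moreover have "R\<^sup>2 < R\<^sup>2 + e\<^sup>2 / 8" using \<open>0 < e\<close> by simp
    ultimately have "eventually (\<lambda>k. (?r (y k))\<^sup>2 < R\<^sup>2 + e\<^sup>2 / 8) sequentially"
      by (rule order_tendstoD(2))
    then obtain N where N: "\<And>k. N \<le> k \<Longrightarrow> (?r (y k))\<^sup>2 < R\<^sup>2 + e\<^sup>2 / 8"
      unfolding eventually_sequentially by blast
    have "dist (y k) (y l) < e" if "N \<le> k" "N \<le> l" for k l
    proof -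
      have "2 * ((?r (y k))\<^sup>2 - R\<^sup>2) + 2 * ((?r (y l))\<^sup>2 - R\<^sup>2) < e\<^sup>2 / 2"
        using N[OF that(1)] N[OF that(2)] by (simp add: field_simps)
      then have "(dist (y k) (y l))\<^sup>2 < e\<^sup>2 / 2"
        using dist_le_real_asym_radius_excess[OF cat u R_nonneg R_le, of "y k" "y l"] by linarith
      moreover have "e\<^sup>2 / 2 < e\<^sup>2" using \<open>0 < e\<close> by simp
      ultimately have "(dist (y k) (y l))\<^sup>2 < e\<^sup>2" by linarith
      then show ?thesis using \<open>0 < e\<close> by (simp add: power_less_imp_less_base)
    qed
    then show "\<exists>N. \<forall>k\<ge>N. \<forall>l\<ge>N. dist (y k) (y l) < e" by blast
  qed
  then obtain c where c: "y \<longlonglongrightarrow> c" using Cauchy_convergent_iff convergent_def by blast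
  have "?r c \<le> ?r (y k) + dist c (y k)" for k
    by (rule real_asym_radius_le_dist[OF u])
  moreover have "(\<lambda>k. ?r (y k) + dist c (y k)) \<longlonglongrightarrow> R"
    using tendsto_add[OF ry tendsto_dist[OF tendsto_const[of c] c]] by simp
  ultimately have "?r c \<le> R"
    by (intro tendsto_lowerbound[OF _ always_eventually]) auto
  then show thesis
    using R_le u by (intro that) (auto simp: asymptotic_center_iff_real intro: order_trans)
qed

section \<open>Mappings with property (P2)\<close>

lemma property_P2_fixed_point_dist:
  assumes "property_P2 T" "T q = q"
  shows "(dist x (T x))\<^sup>2 + (dist (T x) q)\<^sup>2 \<le> (dist x q)\<^sup>2"
proof -
  have "2 * (dist (T x) (T q))\<^sup>2
      \<le> (dist x (T q))\<^sup>2 + (dist q (T x))\<^sup>2 - (dist x (T x))\<^sup>2 - (dist q (T q))\<^sup>2"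
    using assms(1) unfolding property_P2_def by blast
  then show ?thesis using assms(2) by (simp add: dist_commute)
qed

lemma property_P2_quasi_nonexpansive:
  assumes "property_P2 T" "T q = q"
  shows "dist (T x) q \<le> dist x q"
proof -
  have "(dist (T x) q)\<^sup>2 \<le> (dist x q)\<^sup>2"
    using property_P2_fixed_point_dist[OF assms, of x] zero_le_power2[of "dist x (T x)"] by linarith
  then show ?thesis by (rule power2_le_imp_le) simp
qed

(* The sequence T (u n) has the same asymptotic radii as u, so (P2) at the pairs (u n, c)
   passes to the radii: r(T c)^2 <= r(c)^2 - d(c, T c)^2. *)
lemma property_P2_demiclosed:
  assumes P2: "property_P2 T" and u: "bounded (range u)"
    and reg: "(\<lambda>n. dist (u n) (T (u n))) \<longlonglongrightarrow> 0" and c: "asymptotic_center c u"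
  shows "T c = c"
proof -
  let ?v = "\<lambda>n. T (u n)" and ?K = "(dist c (T c))\<^sup>2"
  have v: "bounded (range ?v)" and rv: "\<And>y. real_asym_radius y ?v = real_asym_radius y u"
    using real_asym_radius_cong_dist_tendsto_0[OF u reg] by auto
  have "2 * (dist (T c) (?v n))\<^sup>2 \<le> ((dist (T c) (u n))\<^sup>2 + (dist c (?v n))\<^sup>2) + - ?K" for n
  proof -
    have "2 * (dist (T (u n)) (T c))\<^sup>2 \<le> (dist (u n) (T c))\<^sup>2 + (dist c (T (u n)))\<^sup>2
        - (dist (u n) (T (u n)))\<^sup>2 - (dist c (T c))\<^sup>2"
      using P2 unfolding property_P2_def by blast
    then have "2 * (dist (T c) (?v n))\<^sup>2
        \<le> (dist (T c) (u n))\<^sup>2 + (dist c (?v n))\<^sup>2 - (dist (u n) (T (u n)))\<^sup>2 - ?K"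
      by (simp add: dist_commute)
    then show ?thesis using zero_le_power2[of "dist (u n) (T (u n))"] by linarith
  qed
  then have "real_limsup (\<lambda>n. 2 * (dist (T c) (?v n))\<^sup>2)
      \<le> real_limsup (\<lambda>n. ((dist (T c) (u n))\<^sup>2 + (dist c (?v n))\<^sup>2) + - ?K)"
    by (intro real_limsup_mono always_eventually allI Bseq_add Bseq_add_Bseq Bseq_mult Bfun_const
        Bseq_dist u v)
  also have "\<dots> \<le> real_limsup (\<lambda>n. (dist (T c) (u n))\<^sup>2 + (dist c (?v n))\<^sup>2) - ?K"
    using real_limsup_add_le[OF Bseq_add_Bseq[OF Bseq_dist(2)[OF u] Bseq_dist(2)[OF v]] Bfun_const[of "- ?K"]]
    by simp
  also have "\<dots> \<le> real_limsup (\<lambda>n. (dist (T c) (u n))\<^sup>2) + real_limsup (\<lambda>n. (dist c (?v n))\<^sup>2) - ?K"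
    using real_limsup_add_le[OF Bseq_dist(2)[OF u] Bseq_dist(2)[OF v]] by simp
  finally have "2 * (real_asym_radius (T c) u)\<^sup>2 \<le> (real_asym_radius (T c) u)\<^sup>2 + (real_asym_radius c u)\<^sup>2 - ?K"
    using real_limsup_cmult[OF Bseq_dist(2)[OF v], of 2] real_asym_radius_power2[OF u]
      real_asym_radius_power2[OF v] rv by simp
  moreover have "(real_asym_radius c u)\<^sup>2 \<le> (real_asym_radius (T c) u)\<^sup>2"
    using c u real_asym_radius_nonneg[OF u] by (intro power_mono) (auto simp: asymptotic_center_iff_real)
  ultimately have "?K \<le> 0" by linarith
  then show ?thesis by simp
qed

lemma bounded_range_if_decseq_dist:
  assumes "decseq (\<lambda>n. dist (u n) q)"
  shows "bounded (range u)"
proof -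
  have "dist q (u n) \<le> dist q (u 0)" for n
    using decseqD[OF assms, of 0 n] by (simp add: dist_commute)
  then show ?thesis unfolding bounded_def by blast
qed

(* The radius of a point of F is the same limit along every subsequence, so if the centre of u
   and the centre of a subsequence (both in F) differed, each would have strictly smaller
   radius than the other. *)
lemma Fejer_monotone_Delta_converges:
  fixes u :: "nat \<Rightarrow> 'a::complete_space"
  assumes cat: "CAT0 TYPE('a)" and "q0 \<in> F"
    and Fejer: "\<And>q. q \<in> F \<Longrightarrow> decseq (\<lambda>n. dist (u n) q)"
    and centers: "\<And>\<sigma> c. strict_mono \<sigma> \<Longrightarrow> asymptotic_center c (u \<circ> \<sigma>) \<Longrightarrow> c \<in> F"
  shows "\<exists>p\<in>F. Delta_converges u p"
proof -
  have u: "bounded (range u)" using bounded_range_if_decseq_dist[OF Fejer[OF \<open>q0 \<in> F\<close>]] .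
  have us: "bounded (range (u \<circ> \<sigma>))" for \<sigma> :: "nat \<Rightarrow> nat" by (rule bounded_subset[OF u]) auto
  have "\<exists>L. (\<lambda>n. dist (u n) q) \<longlonglongrightarrow> L" if "q \<in> F" for q
    using decseq_convergent[OF Fejer[OF that], of 0] by auto
  then obtain L where L: "\<And>q. q \<in> F \<Longrightarrow> (\<lambda>n. dist (u n) q) \<longlonglongrightarrow> L q" by metis
  have radius: "real_asym_radius q (u \<circ> \<sigma>) = L q" if "q \<in> F" "strict_mono \<sigma>" for q \<sigma>
    using LIMSEQ_subseq_LIMSEQ[OF L[OF that(1)] that(2)]
    unfolding real_asym_radius_def by (intro real_limsup_tendsto) (simp add: comp_def dist_commute)
  obtain c where c: "asymptotic_center c u" using asymptotic_center_exists[OF cat u] .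
  have "c \<in> F" using centers[OF strict_mono_id, of c] c by simp
  have "asymptotic_center c (u \<circ> \<sigma>)" if \<sigma>: "strict_mono \<sigma>" for \<sigma>
  proof -
    obtain c' where c': "asymptotic_center c' (u \<circ> \<sigma>)" using asymptotic_center_exists[OF cat us] .
    have "c' \<in> F" using centers[OF \<sigma> c'] .
    have "c' = c"
    proof (rule ccontr)
      assume "c' \<noteq> c"
      then have "real_asym_radius c u < real_asym_radius c' u"
        "real_asym_radius c' (u \<circ> \<sigma>) < real_asym_radius c (u \<circ> \<sigma>)"
        using asymptotic_center_radius_less[OF cat u c] asymptotic_center_radius_less[OF cat us c']
        by auto
      then show False
        using radius[OF \<open>c \<in> F\<close> \<sigma>] radius[OF \<open>c' \<in> F\<close> \<sigma>]
          radius[OF \<open>c \<in> F\<close> strict_mono_id] radius[OF \<open>c' \<in> F\<close> strict_mono_id] by simp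
    qed
    then show ?thesis using c' by simp
  qed
  then have "Delta_converges u c"
    unfolding Delta_converges_def using u asymptotic_center_unique[OF cat us] by blast
  then show ?thesis using \<open>c \<in> F\<close> by blast
qed

lemma summable_decrements:
  fixes d a :: "nat \<Rightarrow> real"
  assumes "\<And>n. d n + a (Suc n) \<le> a n" "\<And>n. 0 \<le> d n" "\<And>n. 0 \<le> a n"
  shows "summable d"
proof (rule summableI_nonneg_bounded)
  have partial: "(\<Sum>k<n. d k) + a n \<le> a 0" for n
    by (induction n) (use assms(1) in \<open>auto intro: order_trans[rotated]\<close>)
  show "(\<Sum>k<n. d k) \<le> a 0" for n using partial[of n] assms(3)[of n] by linarith
qed (rule assms(2))

lemma decseq_ratio_tendsto_0:
  fixes d \<gamma> :: "nat \<Rightarrow> real"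
  assumes \<gamma>: "\<And>n. 0 < \<gamma> n" and d: "\<And>n. 0 \<le> d n"
    and "summable (\<lambda>n. (d n)\<^sup>2)" "\<not> summable (\<lambda>n. (\<gamma> n)\<^sup>2)" and dec: "decseq (\<lambda>n. d n / \<gamma> n)"
  shows "(\<lambda>n. d n / \<gamma> n) \<longlonglongrightarrow> 0"
proof -
  have nonneg: "\<forall>n. 0 \<le> d n / \<gamma> n" using d \<gamma> by (simp add: less_imp_le)
  then obtain L where L: "(\<lambda>n. d n / \<gamma> n) \<longlonglongrightarrow> L" and "\<And>n. L \<le> d n / \<gamma> n"
    using decseq_convergent[OF dec] by blast
  have "0 \<le> L" using tendsto_lowerbound[OF L always_eventually] nonneg by simp
  moreover have "\<not> 0 < L"
  proof
    assume "0 < L"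
    have "(\<gamma> n)\<^sup>2 \<le> (d n)\<^sup>2 / L\<^sup>2" for n
    proof -
      have "L * \<gamma> n \<le> d n" using \<open>L \<le> d n / \<gamma> n\<close> \<gamma>[of n] by (simp add: le_divide_eq)
      then have "(L * \<gamma> n)\<^sup>2 \<le> (d n)\<^sup>2" using \<open>0 < L\<close> \<gamma>[of n] by (intro power_mono) auto
      then show ?thesis using \<open>0 < L\<close> by (simp add: le_divide_eq power_mult_distrib mult.commute)
    qed
    then have "summable (\<lambda>n. (\<gamma> n)\<^sup>2)"
      by (intro summable_comparison_test'[OF summable_divide[OF assms(3)]]) auto
    then show False using assms(4) by contradiction
  qed
  ultimately show ?thesis using L by simp
qed

lemma dist_to_other_map_le:
  assumes "0 < \<gamma> n" "0 < \<gamma> m"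
    and C1: "dist (T n w) (T m w) \<le> \<bar>\<gamma> n - \<gamma> m\<bar> / \<gamma> n * dist w (T n w)"
  shows "dist w (T m w) \<le> 2 * dist w (T n w) + \<gamma> m * (dist w (T n w) / \<gamma> n)"
proof -
  let ?d = "dist w (T n w)"
  have "dist w (T m w) \<le> ?d + dist (T n w) (T m w)" by (rule dist_triangle)
  also have "\<dots> \<le> ?d + \<bar>\<gamma> n - \<gamma> m\<bar> / \<gamma> n * ?d" using C1 by simp
  also have "\<bar>\<gamma> n - \<gamma> m\<bar> / \<gamma> n * ?d \<le> (\<gamma> n + \<gamma> m) / \<gamma> n * ?d"
    using assms(1,2) by (intro mult_right_mono divide_right_mono) auto
  also have "(\<gamma> n + \<gamma> m) / \<gamma> n * ?d = ?d + \<gamma> m * (?d / \<gamma> n)"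
    using assms(1) by (simp add: field_simps)
  finally show ?thesis by simp
qed

lemma asymptotically_regular_if_C1_C2:
  fixes T :: "nat \<Rightarrow> 'a::metric_space \<Rightarrow> 'a" and \<gamma> :: "nat \<Rightarrow> real"
  assumes iter: "\<And>n. xs (Suc n) = T n (xs n)" and \<gamma>: "\<And>n. 0 < \<gamma> n"
    and "\<not> summable (\<lambda>n. (\<gamma> n)\<^sup>2)"
    and C1: "\<And>n m w. dist (T n w) (T m w) \<le> \<bar>\<gamma> n - \<gamma> m\<bar> / \<gamma> n * dist w (T n w)"
    and C2: "decseq (\<lambda>n. dist (xs n) (xs (Suc n)) / \<gamma> n)"
    and summable: "summable (\<lambda>n. (dist (xs n) (xs (Suc n)))\<^sup>2)"
  shows "(\<lambda>n. dist (xs n) (T m (xs n))) \<longlonglongrightarrow> 0"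
proof (rule Lim_null_comparison)
  define d where "d n = dist (xs n) (xs (Suc n))" for n
  have ratio: "(\<lambda>n. d n / \<gamma> n) \<longlonglongrightarrow> 0"
    using decseq_ratio_tendsto_0[OF \<gamma> _ summable assms(3) C2] by (simp add: d_def)
  have steps: "(\<lambda>n. d n) \<longlonglongrightarrow> 0"
    using tendsto_real_sqrt[OF summable_LIMSEQ_zero[OF summable]] by (simp add: d_def)
  show "eventually (\<lambda>n. norm (dist (xs n) (T m (xs n))) \<le> 2 * d n + \<gamma> m * (d n / \<gamma> n)) sequentially"
    using dist_to_other_map_le[of \<gamma> _ m T, OF \<gamma> \<gamma> C1]
    by (intro always_eventually allI) (simp add: d_def iter)
  show "(\<lambda>n. 2 * d n + \<gamma> m * (d n / \<gamma> n)) \<longlonglongrightarrow> 0"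
    by (intro tendsto_add_zero tendsto_mult_right_zero steps ratio)
qed

theorem theorem3p5:
  fixes T :: "nat \<Rightarrow> 'a::complete_space \<Rightarrow> 'a"
    and x :: 'a and xs :: "nat \<Rightarrow> 'a" and \<gamma> :: "nat \<Rightarrow> real"
  assumes "CAT0 TYPE('a)"
    and "\<And>n. property_P2 (T n)"
    and "(\<Inter>n. Fix (T n)) \<noteq> {}"
    and "xs 0 = x" and "\<And>n. xs (Suc n) = T n (xs n)"
    and "\<And>n. \<gamma> n > 0"
    and "\<not> summable (\<lambda>n. (\<gamma> n)\<^sup>2)"
    and C1: "\<And>n m w. dist (T n w) (T m w) \<le> \<bar>\<gamma> n - \<gamma> m\<bar> / \<gamma> n * dist w (T n w)"
    and C2: "decseq (\<lambda>n. dist (xs n) (xs (Suc n)) / \<gamma> n)"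
  shows "\<exists>p\<in>(\<Inter>n. Fix (T n)). Delta_converges xs p"
proof -
  define F where "F = (\<Inter>n. Fix (T n))"
  obtain q0 where "q0 \<in> F" using assms(3) F_def by auto
  have fixed: "T n q = q" if "q \<in> F" for q n
    using that unfolding F_def Fix_def by auto
  have Fejer: "decseq (\<lambda>n. dist (xs n) q)" if "q \<in> F" for q
    by (rule decseq_SucI) (simp add: assms(5) property_P2_quasi_nonexpansive[OF assms(2) fixed[OF that]])
  have "summable (\<lambda>n. (dist (xs n) (xs (Suc n)))\<^sup>2)"
    by (rule summable_decrements[where a = "\<lambda>n. (dist (xs n) q0)\<^sup>2"])
      (use property_P2_fixed_point_dist[OF assms(2) fixed[OF \<open>q0 \<in> F\<close>]] in
        \<open>simp_all add: assms(5)\<close>)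
  then have regular: "(\<lambda>n. dist (xs n) (T m (xs n))) \<longlonglongrightarrow> 0" for m
    by (rule asymptotically_regular_if_C1_C2[OF assms(5,6,7) C1 C2])
  have "bounded (range xs)" by (rule bounded_range_if_decseq_dist[OF Fejer[OF \<open>q0 \<in> F\<close>]])
  have "c \<in> F" if "strict_mono \<sigma>" "asymptotic_center c (xs \<circ> \<sigma>)" for \<sigma> c
  proof -
    have "T m c = c" for m
      using property_P2_demiclosed[OF assms(2) bounded_subset[OF \<open>bounded (range xs)\<close>] _ that(2)]
        LIMSEQ_subseq_LIMSEQ[OF regular that(1)]
      by (simp add: comp_def image_subsetI)
    then show ?thesis unfolding F_def Fix_def by auto
  qed
  then show ?thesis
    using Fejer_monotone_Delta_converges[OF assms(1) \<open>q0 \<in> F\<close> Fejer] unfolding F_def by blast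
qed

end
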